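(* Let $H$ be a connected graph and consider Graph Substructure Networks (GSN, in either the GSN-v or the GSN-e variant) whose structural features are computed from the substructure collection $\mathcal{H}=\{H\}$. Suppose one of the following holds: (1) $H$ is not a star graph (of any size; here single vertices and single edges count as star graphs), and the structural features are computed by (not necessarily induced) subgraph matching, i.e. one counts all subgraphs $G_S$ of $G$ with $G_S\simeq H$, $\mathcal{V}_{G_S}\subseteq\mathcal{V}_G$, $\mathcal{E}_{G_S}\subseteq\mathcal{E}_G$; or (2) $H$ is neither a single vertex nor a single edge, and the structural features are computed by induced subgraph matching, i.e. one counts only subgraphs $G_S\simeq H$ with $\mathcal{E}_{G_S}=\mathcal{E}_G\cap(\mathcal{V}_{G_S}\times\mathcal{V}_{G_S})$. Then GSN is strictly more powerful than MPNNs and than the 1-WL test: (a) every function on graphs computable by an MPNN is computable by a GSN, and for any two (vertex-labelled) graphs that the 1-WL test distinguishes there exists a GSN (with suitable, e.g. injective, update and aggregation functions) producing different graph-level outputs for them; and (b) there exist two graphs $G_1,G_2$ that the 1-WL test (and hence every MPNN) does not distinguish, but for which some GSN produces different graph-level outputs.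
   Context: Graphs are finite, simple, undirected, with vertex set $\mathcal{V}_G$ and edge set $\mathcal{E}_G$, and possibly with vertex features (labels) from a countable set and edge features $\mathbf{e}_{u,v}$. Two graphs are isomorphic ($G\simeq H$) if there is an adjacency-preserving bijection between their vertex sets. For a graph $H$, $\mathrm{Aut}(H)$ is its automorphism group; the vertex orbits of $H$ are the classes $O^V_{H,1},\dots,O^V_{H,d_H}$ of the partition of $\mathcal{V}_H$ under $\mathrm{Aut}(H)$. Every automorphism $g$ induces a map $(u,v)\mapsto(g(u),g(v))$ on edges; the resulting classes of (oriented) edges are the edge orbits $O^E_{H,1},\dots$. Vertex structural features: for a graph $G$, a vertex $v$ and orbit index $i$, $x^V_{H,i}(v)=|\{G_S\subseteq G: G_S\simeq H,\ v\in\mathcal{V}_{G_S},\ f(v)\in O^V_{H,i}\}|$, where $f:\mathcal{V}_{G_S}\to\mathcal{V}_H$ is any isomorphism (the orbit does not depend on the choice). Edge structural features: $x^E_{H,i}(u,v)=|\{G_S\simeq H:(u,v)\in\mathcal{E}_{G_S},\ (f(u),f(v))\in O^E_{H,i}\}|$. For a collection $\mathcal{H}=\{H_1,\dots,H_K\}$, $\mathbf{x}^V_v$ and $\mathbf{x}^E_{u,v}$ are the concatenations over all $H\in\mathcal{H}$ and all orbits. A GSN layer updates vertex states by $\mathbf{h}^{t+1}_v=\mathrm{UP}^{t+1}(\mathbf{h}^t_v,\mathbf{m}^{t+1}_v)$, where for GSN-v $\mathbf{m}^{t+1}_v=M^{t+1}(\{\!\{(\mathbf{h}^t_v,\mathbf{h}^t_u,\mathbf{x}^V_v,\mathbf{x}^V_u,\mathbf{e}_{u,v})\}\!\}_{u\in\mathcal{N}(v)})$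 and for GSN-e $\mathbf{m}^{t+1}_v=M^{t+1}(\{\!\{(\mathbf{h}^t_v,\mathbf{h}^t_u,\mathbf{x}^E_{u,v},\mathbf{e}_{u,v})\}\!\}_{u\in\mathcal{N}(v)})$; here $\{\!\{\cdot\}\!\}$ denotes a multiset, $\mathrm{UP}^{t+1}$ is an arbitrary function and $M^{t+1}$ an arbitrary function on multisets, and $\mathbf{h}^0_v$ are the input vertex features. A graph-level output is obtained by applying a readout function to the multiset of final vertex states (e.g. a sum followed by a function). An MPNN is the same architecture without the structural features $\mathbf{x}^V,\mathbf{x}^E$. The 1-WL test assigns initial colours $c^0_v$ (the vertex labels) and refines $c^{t+1}_v=\mathrm{HASH}(c^t_v,\{\!\{c^t_u\}\!\}_{u\in\mathcal{N}(v)})$ with an injective $\mathrm{HASH}$; it distinguishes two graphs if their colour histograms differ at some iteration. A star graph is $K_{1,m}$ for some $m\ge 0$. *)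

theory Defs
  imports Main "HOL-Library.Multiset" "HOL-Library.Countable"
begin

text \<open>A simple undirected graph is given by a vertex set and a symmetric,
irreflexive set of oriented edges (arcs); each undirected edge {u,v} appears
as both (u,v) and (v,u).\<close>

record 'v sgraph =
  verts :: "'v set"
  arcs  :: "('v \<times> 'v) set"

definition wf_sgraph :: "('v, 'z) sgraph_scheme \<Rightarrow> bool" where
  "wf_sgraph G \<longleftrightarrow> finite (verts G) \<and> arcs G \<subseteq> verts G \<times> verts G
     \<and> sym (arcs G) \<and> irrefl (arcs G)"

record ('l, 'f) lgraph = "nat sgraph" +
  label :: "nat \<Rightarrow> 'l"
  efeat :: "nat \<Rightarrow> nat \<Rightarrow> 'f"

definition nbrs :: "('v, 'z) sgraph_scheme \<Rightarrow> 'v \<Rightarrow> 'v set" where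
  "nbrs G v = {u. (v, u) \<in> arcs G}"

definition connected_graph :: "'w sgraph \<Rightarrow> bool" where
  "connected_graph H \<longleftrightarrow> verts H \<noteq> {} \<and>
     (\<forall>x\<in>verts H. \<forall>y\<in>verts H. (x, y) \<in> (arcs H)\<^sup>*)"

definition is_star :: "'w sgraph \<Rightarrow> bool" where
  "is_star H \<longleftrightarrow> (\<exists>c\<in>verts H. \<forall>x y. (x, y) \<in> arcs H \<longleftrightarrow>
      (x \<in> verts H \<and> y \<in> verts H \<and> x \<noteq> y \<and> (x = c \<or> y = c)))"

definition is_single_vertex :: "'w sgraph \<Rightarrow> bool" where
  "is_single_vertex H \<longleftrightarrow> (\<exists>a. verts H = {a} \<and> arcs H = {})"

definition is_single_edge :: "'w sgraph \<Rightarrow> bool" where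
  "is_single_edge H \<longleftrightarrow> (\<exists>a b. a \<noteq> b \<and> verts H = {a, b} \<and> arcs H = {(a, b), (b, a)})"

datatype matching = Subgraph_Matching | Induced_Matching

definition subgraphs :: "matching \<Rightarrow> 'v set \<Rightarrow> ('v \<times> 'v) set \<Rightarrow> ('v set \<times> ('v \<times> 'v) set) set" where
  "subgraphs mode V A = {(S, ES). S \<subseteq> V \<and> ES \<subseteq> A \<inter> (S \<times> S) \<and> sym ES \<and>
      (mode = Induced_Matching \<longrightarrow> ES = A \<inter> (S \<times> S))}"

definition iso_onto :: "('v set \<times> ('v \<times> 'v) set) \<Rightarrow> 'w sgraph \<Rightarrow> ('v \<Rightarrow> 'w) \<Rightarrow> bool" where
  "iso_onto GS H f \<longleftrightarrow> bij_betw f (fst GS) (verts H) \<and>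
     (\<forall>x\<in>fst GS. \<forall>y\<in>fst GS. (x, y) \<in> snd GS \<longleftrightarrow> (f x, f y) \<in> arcs H)"

definition Aut :: "'w sgraph \<Rightarrow> ('w \<Rightarrow> 'w) set" where
  "Aut H = {g. iso_onto (verts H, arcs H) H g}"

definition vertex_orbits :: "'w sgraph \<Rightarrow> 'w set set" where
  "vertex_orbits H = (\<lambda>w. (\<lambda>g. g w) ` Aut H) ` verts H"

definition edge_orbits :: "'w sgraph \<Rightarrow> ('w \<times> 'w) set set" where
  "edge_orbits H = (\<lambda>(a, b). (\<lambda>g. (g a, g b)) ` Aut H) ` arcs H"

text \<open>Vertex structural feature x^V_{H,i}(v), indexed by the orbit Orb = O^V_{H,i}
itself (value 0 for sets that are not orbits); the whole function is the
feature vector x^V_v for the collection {H}.\<close>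

definition xV :: "matching \<Rightarrow> 'w sgraph \<Rightarrow> ('v, 'z) sgraph_scheme \<Rightarrow> 'v \<Rightarrow> 'w set \<Rightarrow> nat" where
  "xV mode H G v Orb = (if Orb \<in> vertex_orbits H then
     card {GS \<in> subgraphs mode (verts G) (arcs G).
             v \<in> fst GS \<and> (\<exists>f. iso_onto GS H f \<and> f v \<in> Orb)}
   else 0)"

definition xE :: "matching \<Rightarrow> 'w sgraph \<Rightarrow> ('v, 'z) sgraph_scheme \<Rightarrow> 'v \<times> 'v \<Rightarrow> ('w \<times> 'w) set \<Rightarrow> nat" where
  "xE mode H G e Orb = (if Orb \<in> edge_orbits H then
     card {GS \<in> subgraphs mode (verts G) (arcs G).
             e \<in> snd GS \<and> (\<exists>f. iso_onto GS H f \<and> (f (fst e), f (snd e)) \<in> Orb)}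
   else 0)"

text \<open>The message of layer t+1 at v is
M(\{\{(h_v, h_u, s(v,u), e_{u,v})\}\}_{u \<in> N(v)}), where s is the structural
information of the network type: unit for MPNNs, (x^V_v, x^V_u) for GSN-v,
x^E_{u,v} for GSN-e.\<close>

record ('l, 'h, 'm, 's, 'f, 'o) mpnet =
  inp     :: "'l \<Rightarrow> 'h"
  layers  :: "(('h \<Rightarrow> 'm \<Rightarrow> 'h) \<times> (('h \<times> 'h \<times> 's \<times> 'f) multiset \<Rightarrow> 'm)) list"
  readout :: "'h multiset \<Rightarrow> 'o"

definition layer_step ::
  "(nat \<Rightarrow> nat \<Rightarrow> 's) \<Rightarrow> ('l, 'f) lgraph \<Rightarrow>
   ('h \<Rightarrow> 'm \<Rightarrow> 'h) \<times> (('h \<times> 'h \<times> 's \<times> 'f) multiset \<Rightarrow> 'm) \<Rightarrow>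
   (nat \<Rightarrow> 'h) \<Rightarrow> (nat \<Rightarrow> 'h)" where
  "layer_step sf G L h = (\<lambda>v. fst L (h v)
      (snd L (image_mset (\<lambda>u. (h v, h u, sf v u, efeat G u v)) (mset_set (nbrs G v)))))"

definition final_states ::
  "(nat \<Rightarrow> nat \<Rightarrow> 's) \<Rightarrow> ('l, 'h, 'm, 's, 'f, 'o) mpnet \<Rightarrow> ('l, 'f) lgraph \<Rightarrow> nat \<Rightarrow> 'h" where
  "final_states sf N G = foldl (\<lambda>h L. layer_step sf G L h) (\<lambda>v. inp N (label G v)) (layers N)"

definition net_output ::
  "(nat \<Rightarrow> nat \<Rightarrow> 's) \<Rightarrow> ('l, 'h, 'm, 's, 'f, 'o) mpnet \<Rightarrow> ('l, 'f) lgraph \<Rightarrow> 'o" where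
  "net_output sf N G = readout N (image_mset (final_states sf N G) (mset_set (verts G)))"

definition mpnn_output :: "('l, 'h, 'm, unit, 'f, 'o) mpnet \<Rightarrow> ('l, 'f) lgraph \<Rightarrow> 'o" where
  "mpnn_output N G = net_output (\<lambda>_ _. ()) N G"

datatype gsn_variant = GSN_v | GSN_e

type_synonym 'w gsn_struct = "(('w set \<Rightarrow> nat) \<times> ('w set \<Rightarrow> nat)) + (('w \<times> 'w) set \<Rightarrow> nat)"

definition gsn_struct :: "matching \<Rightarrow> gsn_variant \<Rightarrow> 'w sgraph \<Rightarrow> ('l, 'f) lgraph \<Rightarrow>
    nat \<Rightarrow> nat \<Rightarrow> 'w gsn_struct" where
  "gsn_struct mode var H G v u = (case var of
       GSN_v \<Rightarrow> Inl (xV mode H G v, xV mode H G u)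
     | GSN_e \<Rightarrow> Inr (xE mode H G (u, v)))"

definition gsn_output ::
  "matching \<Rightarrow> gsn_variant \<Rightarrow> 'w sgraph \<Rightarrow> ('l, 'h, 'm, 'w gsn_struct, 'f, 'o) mpnet \<Rightarrow>
   ('l, 'f) lgraph \<Rightarrow> 'o" where
  "gsn_output mode var H N G = net_output (gsn_struct mode var H G) N G"

text \<open>Colours with a canonical injective HASH (the datatype constructor).\<close>

datatype 'l wl_colour = WL_Init 'l | WL_Refine "'l wl_colour" "'l wl_colour multiset"

primrec wl_col :: "('l, 'f) lgraph \<Rightarrow> nat \<Rightarrow> nat \<Rightarrow> 'l wl_colour" where
  "wl_col G 0 = (\<lambda>v. WL_Init (label G v))"
| "wl_col G (Suc t) = (\<lambda>v. WL_Refine (wl_col G t v)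
                              (image_mset (wl_col G t) (mset_set (nbrs G v))))"

definition wl_distinguishes :: "('l, 'f) lgraph \<Rightarrow> ('l, 'f) lgraph \<Rightarrow> bool" where
  "wl_distinguishes G1 G2 \<longleftrightarrow>
     (\<exists>t. image_mset (wl_col G1 t) (mset_set (verts G1)) \<noteq>
          image_mset (wl_col G2 t) (mset_set (verts G2)))"

end

(*
  (a) A GSN that ignores its structural features is an MPNN, and a GSN whose states are
  (codes of) 1-WL colours reproduces the colour histograms, so every pair of graphs that 1-WL
  separates is separated by some GSN.

  (b) On two d-regular graphs with the same number of vertices and constant features, 1-WL
  and every MPNN compute the same constant colouring. It therefore suffices to find two such
  graphs of which only the first contains a copy of H: a one-layer GSN that checks whether some
  structural feature is nonzero tells them apart. With k the number of vertices of H: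
  if H has a triangle (and is complete, for induced matching), compare two disjoint copies of
  K_k with the bipartite double cover of K_k. Otherwise every degree of H is at most some d
  such that either d + 1 < k (subgraph matching, where a triangle-free graph with a vertex of
  degree k - 1 is a star) or d = k - 1 and H is not complete (induced matching). Pad H to a
  d-regular graph along hypercube directions and compare it with disjoint copies of K_(d+1):
  a connected copy of H lies inside one clique, which is too small or, for induced matching,
  would force H to be complete.
*)

theory Submission
  imports Defs
begin

lemma nbrs_subset_verts: "wf_sgraph G \<Longrightarrow> nbrs G v \<subseteq> verts G"
  by (auto simp: wf_sgraph_def nbrs_def)

lemma finite_nbrs:
  assumes "wf_sgraph G"
  shows "finite (nbrs G v)"
  using nbrs_subset_verts[OF assms] assms by (auto simp: wf_sgraph_def intro: finite_subset)

lemma arcs_subset_verts: "wf_sgraph H \<Longrightarrow> (x, y) \<in> arcs H \<Longrightarrow> x \<in> verts H \<and> y \<in> verts H"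
  by (auto simp: wf_sgraph_def)

lemma finite_arcs: "wf_sgraph G \<Longrightarrow> finite (arcs G)"
  by (auto simp: wf_sgraph_def intro: finite_subset)

lemma card_nbrs_less:
  assumes "wf_sgraph H" and "x \<in> verts H"
  shows "card (nbrs H x) < card (verts H)"
proof -
  have "nbrs H x \<subseteq> verts H - {x}"
    using assms(1) by (auto simp: nbrs_def wf_sgraph_def irrefl_def)
  moreover have "finite (verts H)"
    using assms(1) by (simp add: wf_sgraph_def)
  ultimately have "card (nbrs H x) \<le> card (verts H - {x})"
    by (intro card_mono) auto
  also have "\<dots> < card (verts H)"
    using \<open>finite (verts H)\<close> assms(2) by (rule card_Diff1_less)
  finally show ?thesis .
qed

lemma image_mset_mset_set_const_on:
  assumes "finite A" and "\<forall>x\<in>A. g x = c"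
  shows "image_mset g (mset_set A) = replicate_mset (card A) c"
proof -
  have "image_mset g (mset_set A) = image_mset (\<lambda>_. c) (mset_set A)"
    using assms by (intro image_mset_cong) simp
  then show ?thesis
    using assms(1) by (simp add: image_mset_const_eq)
qed

section \<open>Simulating MPNNs and the 1-WL test\<close>

definition forget_layer ::
  "('h \<Rightarrow> 'm \<Rightarrow> 'h) \<times> (('h \<times> 'h \<times> unit \<times> 'f) multiset \<Rightarrow> 'm) \<Rightarrow>
   ('h \<Rightarrow> 'm \<Rightarrow> 'h) \<times> (('h \<times> 'h \<times> 's \<times> 'f) multiset \<Rightarrow> 'm)" where
  "forget_layer L = (fst L, snd L \<circ> image_mset (\<lambda>(hv, hu, _, e). (hv, hu, (), e)))"

definition forget_struct ::
  "('l, 'h, 'm, unit, 'f, 'o) mpnet \<Rightarrow> ('l, 'h, 'm, 's, 'f, 'o) mpnet" where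
  "forget_struct N = \<lparr>inp = inp N, layers = map forget_layer (layers N), readout = readout N\<rparr>"

lemma layer_step_forget_layer: "layer_step sf G (forget_layer L) h = layer_step (\<lambda>_ _. ()) G L h"
  by (simp add: forget_layer_def layer_step_def multiset.map_comp comp_def)

lemma net_output_forget_struct: "net_output sf (forget_struct N) G = mpnn_output N G"
  by (simp add: mpnn_output_def net_output_def final_states_def forget_struct_def
      foldl_map layer_step_forget_layer)

instance multiset :: (countable) countable
proof
  have "inj (\<lambda>M :: 'a multiset. sorted_list_of_multiset (image_mset to_nat M))"
    by (rule injI) (metis mset_sorted_list_of_multiset multiset.inj_map_strong to_nat_split)
  then show "\<exists>f :: 'a multiset \<Rightarrow> nat. inj f"
    by (metis inj_compose inj_to_nat)
qed

instance wl_colour :: (countable) countable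
  by countable_datatype

text \<open>The state of a vertex is the code \<^const>\<open>to_nat\<close> of its 1-WL colour, so every layer
  performs one refinement round and the readout encodes the colour histogram.\<close>

definition wl_net :: "nat \<Rightarrow> ('l::countable, nat, nat, 's, 'f, nat) mpnet" where
  "wl_net t = \<lparr>inp = (\<lambda>l. to_nat (WL_Init l)),
     layers = replicate t
       (\<lambda>h m. to_nat (WL_Refine (from_nat h) (from_nat m) :: 'l wl_colour),
        \<lambda>X. to_nat (image_mset (\<lambda>(_, hu, _). from_nat hu :: 'l wl_colour) X)),
     readout = (\<lambda>X. to_nat (image_mset (from_nat :: nat \<Rightarrow> 'l wl_colour) X))\<rparr>"

lemma final_states_wl_net:
  "final_states sf (wl_net t :: ('l::countable, nat, nat, 's, 'f, nat) mpnet) G =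
     (\<lambda>v. to_nat (wl_col G t v))"
proof (induction t)
  case (Suc t)
  then show ?case
    by (simp add: final_states_def wl_net_def layer_step_def multiset.map_comp comp_def
        flip: replicate_append_same)
qed (simp add: final_states_def wl_net_def)

lemma net_output_wl_net:
  "net_output sf (wl_net t :: ('l::countable, nat, nat, 's, 'f, nat) mpnet) G =
     to_nat (image_mset (wl_col G t) (mset_set (verts G)))"
  by (simp add: net_output_def final_states_wl_net multiset.map_comp comp_def)
    (simp add: wl_net_def multiset.map_comp comp_def)

lemma wl_net_distinguishes:
  fixes G1 G2 :: "('l::countable, 'f) lgraph"
  assumes "wl_distinguishes G1 G2"
  shows "\<exists>t. net_output sf1 (wl_net t :: ('l, nat, nat, 's, 'f, nat) mpnet) G1 \<noteq>
             net_output sf2 (wl_net t :: ('l, nat, nat, 's, 'f, nat) mpnet) G2"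
  using assms unfolding wl_distinguishes_def net_output_wl_net by auto

section \<open>Regular graphs with uniform features\<close>

definition regular :: "nat \<Rightarrow> ('v, 'z) sgraph_scheme \<Rightarrow> bool" where
  "regular d G \<longleftrightarrow> (\<forall>v\<in>verts G. card (nbrs G v) = d)"

lemma layer_step_regular:
  fixes G :: "('l, 'f) lgraph"
  assumes "wf_sgraph G" and "regular d G" and "efeat G = (\<lambda>_ _. e)"
    and "\<forall>u\<in>verts G. h u = c" and "v \<in> verts G"
  shows "layer_step (\<lambda>_ _. ()) G L h v = fst L c (snd L (replicate_mset d (c, c, (), e)))"
proof -
  have "image_mset (\<lambda>u. (h v, h u, (), efeat G u v)) (mset_set (nbrs G v)) =
        replicate_mset (card (nbrs G v)) (c, c, (), e)"
    using assms nbrs_subset_verts[OF assms(1)]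
    by (intro image_mset_mset_set_const_on finite_nbrs) auto
  then show ?thesis
    using assms(2,4,5) by (simp add: layer_step_def regular_def)
qed

lemma final_states_regular:
  fixes G :: "('l, 'f) lgraph"
  assumes "wf_sgraph G" and "regular d G" and "label G = (\<lambda>_. l)" and "efeat G = (\<lambda>_ _. e)"
    and "v \<in> verts G"
  shows "final_states (\<lambda>_ _. ()) N G v =
           foldl (\<lambda>c L. fst L c (snd L (replicate_mset d (c, c, (), e)))) (inp N l) (layers N)"
proof -
  have "\<forall>u\<in>verts G. h u = c \<Longrightarrow>
        foldl (\<lambda>h L. layer_step (\<lambda>_ _. ()) G L h) h Ls v =
        foldl (\<lambda>c L. fst L c (snd L (replicate_mset d (c, c, (), e)))) c Ls" for h c Ls
  proof (induction Ls arbitrary: h c)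
    case (Cons L Ls)
    have "\<forall>u\<in>verts G.
            layer_step (\<lambda>_ _. ()) G L h u = fst L c (snd L (replicate_mset d (c, c, (), e)))"
      using layer_step_regular[OF assms(1,2,4) Cons.prems] by blast
    from Cons.IH[OF this] show ?case by simp
  qed (use assms(5) in simp)
  from this[of "\<lambda>_. inp N l" "inp N l"] show ?thesis
    using assms(3) by (simp add: final_states_def)
qed

lemma wl_col_regular:
  fixes G :: "('l, 'f) lgraph"
  assumes "wf_sgraph G" and "regular d G" and "label G = (\<lambda>_. l)" and "v \<in> verts G"
  shows "wl_col G t v = ((\<lambda>c. WL_Refine c (replicate_mset d c)) ^^ t) (WL_Init l)"
  using assms(4)
proof (induction t arbitrary: v)
  case (Suc t)
  let ?c = "((\<lambda>c. WL_Refine c (replicate_mset d c)) ^^ t) (WL_Init l)"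
  have "image_mset (wl_col G t) (mset_set (nbrs G v)) = replicate_mset (card (nbrs G v)) ?c"
    using Suc.IH nbrs_subset_verts[OF assms(1)]
    by (intro image_mset_mset_set_const_on finite_nbrs assms(1)) auto
  moreover have "card (nbrs G v) = d"
    using assms(2) Suc.prems by (simp add: regular_def)
  ultimately have "wl_col G (Suc t) v = WL_Refine ?c (replicate_mset d ?c)"
    using Suc.IH[OF Suc.prems] by (simp only: wl_col.simps)
  then show ?case
    by (simp only: funpow.simps comp_def)
qed (simp add: assms(3))

definition regular_twins :: "('l, 'f) lgraph \<Rightarrow> ('l, 'f) lgraph \<Rightarrow> bool" where
  "regular_twins G1 G2 \<longleftrightarrow> wf_sgraph G1 \<and> wf_sgraph G2 \<and> card (verts G1) = card (verts G2) \<and>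
     (\<exists>d. regular d G1 \<and> regular d G2) \<and>
     (\<exists>l. label G1 = (\<lambda>_. l) \<and> label G2 = (\<lambda>_. l)) \<and>
     (\<exists>e. efeat G1 = (\<lambda>_ _. e) \<and> efeat G2 = (\<lambda>_ _. e))"

lemma regular_twins_not_wl_distinguishes:
  assumes "regular_twins G1 G2"
  shows "\<not> wl_distinguishes G1 G2"
proof -
  obtain d l where twins: "card (verts G1) = card (verts G2)"
    and "\<And>G. G \<in> {G1, G2} \<Longrightarrow> wf_sgraph G \<and> regular d G \<and> label G = (\<lambda>_. l)"
    using assms unfolding regular_twins_def by blast
  then have "image_mset (wl_col G t) (mset_set (verts G)) =
      replicate_mset (card (verts G)) (((\<lambda>c. WL_Refine c (replicate_mset d c)) ^^ t) (WL_Init l))"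
    if "G \<in> {G1, G2}" for G t
    using that by (intro image_mset_mset_set_const_on) (auto simp: wf_sgraph_def wl_col_regular)
  then show ?thesis
    using twins by (simp add: wl_distinguishes_def)
qed

lemma regular_twins_mpnn_output_eq:
  assumes "regular_twins G1 G2"
  shows "mpnn_output N G1 = mpnn_output N G2"
proof -
  obtain d l e where twins: "card (verts G1) = card (verts G2)"
    and "\<And>G. G \<in> {G1, G2} \<Longrightarrow>
           wf_sgraph G \<and> regular d G \<and> label G = (\<lambda>_. l) \<and> efeat G = (\<lambda>_ _. e)"
    using assms unfolding regular_twins_def by blast
  then have "image_mset (final_states (\<lambda>_ _. ()) N G) (mset_set (verts G)) =
      replicate_mset (card (verts G))
        (foldl (\<lambda>c L. fst L c (snd L (replicate_mset d (c, c, (), e)))) (inp N l) (layers N))"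
    if "G \<in> {G1, G2}" for G
    using that
    by (intro image_mset_mset_set_const_on) (auto simp: wf_sgraph_def final_states_regular)
  then show ?thesis
    using twins by (simp add: mpnn_output_def net_output_def)
qed

section \<open>Copies of a pattern\<close>

definition has_copy :: "matching \<Rightarrow> 'w sgraph \<Rightarrow> ('v, 'z) sgraph_scheme \<Rightarrow> bool" where
  "has_copy mode H G \<longleftrightarrow> (\<exists>GS\<in>subgraphs mode (verts G) (arcs G). \<exists>f. iso_onto GS H f)"

definition embeds :: "matching \<Rightarrow> 'w sgraph \<Rightarrow> ('v, 'z) sgraph_scheme \<Rightarrow> ('w \<Rightarrow> 'v) \<Rightarrow> bool" where
  "embeds mode H G g \<longleftrightarrow> inj_on g (verts H) \<and> g ` verts H \<subseteq> verts G \<and>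
     (\<forall>x\<in>verts H. \<forall>y\<in>verts H. (x, y) \<in> arcs H \<longrightarrow> (g x, g y) \<in> arcs G) \<and>
     (mode = Induced_Matching \<longrightarrow>
        (\<forall>x\<in>verts H. \<forall>y\<in>verts H. (g x, g y) \<in> arcs G \<longrightarrow> (x, y) \<in> arcs H))"

lemma has_copy_embedsE:
  assumes "has_copy mode H G"
  obtains g where "embeds mode H G g"
proof -
  obtain S ES f where sub: "(S, ES) \<in> subgraphs mode (verts G) (arcs G)"
    and iso: "iso_onto (S, ES) H f"
    using assms unfolding has_copy_def by auto
  have bij: "bij_betw f S (verts H)"
    and arcs_iff: "\<forall>x\<in>S. \<forall>y\<in>S. (x, y) \<in> ES \<longleftrightarrow> (f x, f y) \<in> arcs H"
    using iso unfolding iso_onto_def by simp_all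
  define g where "g = inv_into S f"
  have g: "bij_betw g (verts H) S"
    unfolding g_def by (rule bij_betw_inv_into[OF bij])
  have "f (g x) = x" if "x \<in> verts H" for x
    using bij that by (simp add: g_def bij_betw_def f_inv_into_f)
  then have "(g x, g y) \<in> ES \<longleftrightarrow> (x, y) \<in> arcs H" if "x \<in> verts H" "y \<in> verts H" for x y
    using arcs_iff that bij_betwE[OF g] by metis
  then have "embeds mode H G g"
    using sub g by (auto simp: embeds_def subgraphs_def bij_betw_def)
  then show thesis ..
qed

lemma embeds_has_copy:
  assumes "wf_sgraph H" and "embeds mode H G g"
  shows "has_copy mode H G"
proof -
  have inj: "inj_on g (verts H)" and into: "g ` verts H \<subseteq> verts G"
    and fwd: "\<forall>x\<in>verts H. \<forall>y\<in>verts H. (x, y) \<in> arcs H \<longrightarrow> (g x, g y) \<in> arcs G"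
    and bwd: "mode = Induced_Matching \<longrightarrow>
                (\<forall>x\<in>verts H. \<forall>y\<in>verts H. (g x, g y) \<in> arcs G \<longrightarrow> (x, y) \<in> arcs H)"
    using assms(2) by (auto simp: embeds_def)
  define S where "S = g ` verts H"
  define ES where "ES = map_prod g g ` arcs H"
  have ES_iff: "(g x, g y) \<in> ES \<longleftrightarrow> (x, y) \<in> arcs H" if "x \<in> verts H" "y \<in> verts H" for x y
    using that inj arcs_subset_verts[OF assms(1)] by (auto simp: ES_def inj_on_eq_iff)
  have "sym ES"
    using assms(1) by (auto simp: ES_def sym_def wf_sgraph_def)
  moreover have "ES \<subseteq> arcs G \<inter> S \<times> S"
    using fwd arcs_subset_verts[OF assms(1)] by (auto simp: ES_def S_def)
  moreover have "arcs G \<inter> S \<times> S \<subseteq> ES" if "mode = Induced_Matching"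
    using bwd that ES_iff by (auto simp: S_def)
  ultimately have "(S, ES) \<in> subgraphs mode (verts G) (arcs G)"
    using into by (auto simp: subgraphs_def S_def)
  moreover have "iso_onto (S, ES) H (inv_into (verts H) g)"
    using inj ES_iff by (auto simp: iso_onto_def S_def bij_betw_inv_into inj_on_imp_bij_betw)
  ultimately show ?thesis
    unfolding has_copy_def by blast
qed

lemma embeds_class_const:
  assumes "wf_sgraph H" and "connected_graph H" and "embeds mode H G g"
    and "\<forall>(a, b)\<in>arcs G. cl a = cl b" and "x \<in> verts H" and "y \<in> verts H"
  shows "cl (g x) = cl (g y)"
proof -
  have "(x, y) \<in> (arcs H)\<^sup>*"
    using assms(2,5,6) by (auto simp: connected_graph_def)
  then show ?thesis
  proof (induction rule: rtrancl_induct)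
    case (step y z)
    then have "(g y, g z) \<in> arcs G"
      using assms(3) arcs_subset_verts[OF assms(1)] by (auto simp: embeds_def)
    then show ?case
      using step.IH assms(4) by auto
  qed simp
qed

lemma no_copy_if_classes_small:
  assumes "wf_sgraph H" and "connected_graph H" and "finite (verts G)"
    and "\<forall>(a, b)\<in>arcs G. cl a = cl b" and "\<forall>c. card {x\<in>verts G. cl x = c} < card (verts H)"
  shows "\<not> has_copy mode H G"
proof
  assume "has_copy mode H G"
  then obtain g where g: "embeds mode H G g"
    by (rule has_copy_embedsE)
  obtain x where x: "x \<in> verts H"
    using assms(2) by (auto simp: connected_graph_def)
  have "g ` verts H \<subseteq> {v\<in>verts G. cl v = cl (g x)}"
    using g embeds_class_const[OF assms(1,2) g assms(4) x] by (auto simp: embeds_def)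
  then have "card (g ` verts H) \<le> card {v\<in>verts G. cl v = cl (g x)}"
    using assms(3) by (intro card_mono) auto
  moreover have "card (g ` verts H) = card (verts H)"
    using g by (simp add: embeds_def card_image)
  ultimately show False
    using assms(5) by (metis not_le)
qed

definition is_complete :: "'w sgraph \<Rightarrow> bool" where
  "is_complete H \<longleftrightarrow> (\<forall>x\<in>verts H. \<forall>y\<in>verts H. x \<noteq> y \<longrightarrow> (x, y) \<in> arcs H)"

definition has_triangle :: "'w sgraph \<Rightarrow> bool" where
  "has_triangle H \<longleftrightarrow> (\<exists>p q r. (p, q) \<in> arcs H \<and> (q, r) \<in> arcs H \<and> (p, r) \<in> arcs H)"

lemma no_induced_copy_in_cliques:
  assumes "wf_sgraph H" and "connected_graph H" and "\<not> is_complete H"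
    and "\<forall>a b. (a, b) \<in> arcs G \<longleftrightarrow> a \<in> verts G \<and> b \<in> verts G \<and> cl a = cl b \<and> a \<noteq> b"
  shows "\<not> has_copy Induced_Matching H G"
proof
  assume "has_copy Induced_Matching H G"
  then obtain g where g: "embeds Induced_Matching H G g"
    by (rule has_copy_embedsE)
  obtain x y where xy: "x \<in> verts H" "y \<in> verts H" "x \<noteq> y" "(x, y) \<notin> arcs H"
    using assms(3) by (auto simp: is_complete_def)
  have "cl (g x) = cl (g y)"
    using embeds_class_const[OF assms(1,2) g _ xy(1,2)] assms(4) by blast
  moreover have "g x \<noteq> g y" "g x \<in> verts G" "g y \<in> verts G"
    using g xy by (auto simp: embeds_def inj_on_eq_iff)
  ultimately have "(g x, g y) \<in> arcs G"
    using assms(4) by blast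
  then show False
    using g xy by (auto simp: embeds_def)
qed

lemma no_copy_in_bipartite:
  assumes "wf_sgraph H" and "has_triangle H" and "\<forall>(a, b)\<in>arcs G. side a \<noteq> (side b :: bool)"
  shows "\<not> has_copy mode H G"
proof
  assume "has_copy mode H G"
  then obtain g where g: "embeds mode H G g"
    by (rule has_copy_embedsE)
  obtain p q r where "(p, q) \<in> arcs H" "(q, r) \<in> arcs H" "(p, r) \<in> arcs H"
    using assms(2) by (auto simp: has_triangle_def)
  then have "(g p, g q) \<in> arcs G" "(g q, g r) \<in> arcs G" "(g p, g r) \<in> arcs G"
    using g arcs_subset_verts[OF assms(1)] by (auto simp: embeds_def)
  then have "side (g p) \<noteq> side (g q)" "side (g q) \<noteq> side (g r)" "side (g p) \<noteq> side (g r)"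
    using assms(3) by auto
  then show False
    by auto
qed

section \<open>Detecting copies with a GSN\<close>

definition struct_nonzero :: "'w gsn_struct \<Rightarrow> bool" where
  "struct_nonzero s \<longleftrightarrow> (case s of Inl (xv, _) \<Rightarrow> xv \<noteq> (\<lambda>_. 0) | Inr xe \<Rightarrow> xe \<noteq> (\<lambda>_. 0))"

definition detect_net :: "('l, nat, nat, 'w gsn_struct, 'f, nat) mpnet" where
  "detect_net = \<lparr>inp = (\<lambda>_. 0),
     layers = [(\<lambda>_ m. m, \<lambda>X. if \<exists>(_, _, s, _)\<in>#X. struct_nonzero s then 1 else 0)],
     readout = (\<lambda>X. if \<exists>h\<in>#X. h \<noteq> 0 then 1 else 0)\<rparr>"

lemma gsn_output_detect_net:
  assumes "wf_sgraph G"
  shows "gsn_output mode var H detect_net G =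
    (if \<exists>v\<in>verts G. \<exists>u\<in>nbrs G v. struct_nonzero (gsn_struct mode var H G v u) then 1 else 0)"
  using assms finite_nbrs[OF assms]
  by (simp add: gsn_output_def net_output_def final_states_def detect_net_def layer_step_def
      wf_sgraph_def) blast

lemma struct_zero_if_no_copy:
  assumes "\<not> has_copy mode H G"
  shows "\<not> struct_nonzero (gsn_struct mode var H G v u)"
proof -
  have no_match: "{GS \<in> subgraphs mode (verts G) (arcs G). P GS \<and> (\<exists>f. iso_onto GS H f \<and> Q f)} = {}"
    for P Q
    using assms by (auto simp: has_copy_def)
  have "xV mode H G v = (\<lambda>_. 0)" and "xE mode H G (u, v) = (\<lambda>_. 0)"
    unfolding xV_def xE_def by (simp_all only: no_match card.empty if_cancel)
  then show ?thesis
    by (cases var) (simp_all add: gsn_struct_def struct_nonzero_def)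
qed

lemma finite_subgraphs: "finite V \<Longrightarrow> finite A \<Longrightarrow> finite (subgraphs mode V A)"
  by (rule finite_subset[of _ "Pow V \<times> Pow A"]) (auto simp: subgraphs_def)

lemma id_in_Aut: "id \<in> Aut H"
  by (simp add: Aut_def iso_onto_def)

lemma xV_copy_nonzero:
  assumes "wf_sgraph G" and "(S, ES) \<in> subgraphs mode (verts G) (arcs G)"
    and "iso_onto (S, ES) H f" and "v \<in> S"
  shows "xV mode H G v ((\<lambda>g. g (f v)) ` Aut H) \<noteq> 0"
proof -
  define Orb where "Orb = (\<lambda>g. g (f v)) ` Aut H"
  have "f v \<in> verts H"
    using assms(3,4) by (auto simp: iso_onto_def bij_betw_def)
  then have orbit: "Orb \<in> vertex_orbits H"
    by (simp add: Orb_def vertex_orbits_def)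
  have "f v \<in> Orb"
    unfolding Orb_def using id_in_Aut[of H] by (rule rev_image_eqI) simp
  then have "(S, ES) \<in> {GS \<in> subgraphs mode (verts G) (arcs G).
               v \<in> fst GS \<and> (\<exists>f. iso_onto GS H f \<and> f v \<in> Orb)}"
    (is "_ \<in> ?copies")
    using assms(2-4) by auto
  moreover have "finite ?copies"
    using assms(1) by (auto simp: wf_sgraph_def finite_arcs finite_subgraphs)
  ultimately have "card ?copies \<noteq> 0"
    using card_0_eq by blast
  then show ?thesis
    unfolding xV_def Orb_def[symmetric] if_P[OF orbit] .
qed

lemma xE_copy_nonzero:
  assumes "wf_sgraph G" and "(S, ES) \<in> subgraphs mode (verts G) (arcs G)"
    and "iso_onto (S, ES) H f" and "(u, v) \<in> ES"
  shows "xE mode H G (u, v) ((\<lambda>g. (g (f u), g (f v))) ` Aut H) \<noteq> 0"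
proof -
  define Orb where "Orb = (\<lambda>g. (g (f u), g (f v))) ` Aut H"
  have "u \<in> S" "v \<in> S"
    using assms(2,4) by (auto simp: subgraphs_def)
  then have "(f u, f v) \<in> arcs H"
    using assms(3,4) by (auto simp: iso_onto_def)
  then have orbit: "Orb \<in> edge_orbits H"
    unfolding Orb_def edge_orbits_def by (rule rev_image_eqI) simp
  have "(f u, f v) \<in> Orb"
    unfolding Orb_def using id_in_Aut[of H] by (rule rev_image_eqI) simp
  then have "(S, ES) \<in> {GS \<in> subgraphs mode (verts G) (arcs G).
               (u, v) \<in> snd GS \<and> (\<exists>f. iso_onto GS H f \<and> (f (fst (u, v)), f (snd (u, v))) \<in> Orb)}"
    (is "_ \<in> ?copies")
    using assms(2-4) by auto
  moreover have "finite ?copies"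
    using assms(1) by (auto simp: wf_sgraph_def finite_arcs finite_subgraphs)
  ultimately have "card ?copies \<noteq> 0"
    using card_0_eq by blast
  then show ?thesis
    unfolding xE_def Orb_def[symmetric] if_P[OF orbit] .
qed

lemma struct_nonzero_if_copy:
  assumes "wf_sgraph G" and "wf_sgraph H" and "arcs H \<noteq> {}" and "has_copy mode H G"
  shows "\<exists>v\<in>verts G. \<exists>u\<in>nbrs G v. struct_nonzero (gsn_struct mode var H G v u)"
proof -
  obtain S ES f where sub: "(S, ES) \<in> subgraphs mode (verts G) (arcs G)"
    and iso: "iso_onto (S, ES) H f"
    using assms(4) by (auto simp: has_copy_def)
  obtain p q where pq: "(p, q) \<in> arcs H"
    using assms(3) by auto
  then have "p \<in> f ` S" "q \<in> f ` S"
    using iso arcs_subset_verts[OF assms(2)] by (auto simp: iso_onto_def bij_betw_def)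
  then obtain v u where "v \<in> S" "u \<in> S" "f v = p" "f u = q"
    by blast
  then have vu: "(v, u) \<in> ES"
    using iso pq by (auto simp: iso_onto_def)
  then have uv: "(u, v) \<in> ES"
    using sub by (auto simp: subgraphs_def sym_def)
  have "v \<in> verts G" "u \<in> nbrs G v"
    using sub vu by (auto simp: subgraphs_def nbrs_def)
  moreover have "struct_nonzero (gsn_struct mode var H G v u)"
    using xV_copy_nonzero[OF assms(1) sub iso, of v] xE_copy_nonzero[OF assms(1) sub iso uv] vu sub
    by (cases var) (auto simp: gsn_struct_def struct_nonzero_def subgraphs_def)
  ultimately show ?thesis
    by blast
qed

lemma detect_net_separates:
  assumes "wf_sgraph G1" and "wf_sgraph G2" and "wf_sgraph H" and "arcs H \<noteq> {}"
    and "has_copy mode H G1" and "\<not> has_copy mode H G2"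
  shows "gsn_output mode var H detect_net G1 \<noteq> gsn_output mode var H detect_net G2"
  using struct_nonzero_if_copy[OF assms(1,3,4,5)] struct_zero_if_no_copy[OF assms(6)]
  by (simp add: gsn_output_detect_net assms(1,2))

section \<open>Regular twins separated by the pattern\<close>

definition lgraph_of :: "'a::countable set \<Rightarrow> ('a \<Rightarrow> 'a \<Rightarrow> bool) \<Rightarrow> ('l, 'f) lgraph" where
  "lgraph_of V R = \<lparr>verts = to_nat ` V,
     arcs = {(to_nat x, to_nat y) | x y. x \<in> V \<and> y \<in> V \<and> R x y},
     label = (\<lambda>_. undefined), efeat = (\<lambda>_ _. undefined)\<rparr>"

lemma verts_lgraph_of: "verts (lgraph_of V R) = to_nat ` V"
  by (simp add: lgraph_of_def)

lemma arcs_lgraph_of: "arcs (lgraph_of V R) = {(to_nat x, to_nat y) | x y. x \<in> V \<and> y \<in> V \<and> R x y}"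
  by (simp add: lgraph_of_def)

lemma to_nat_arc_lgraph_of [simp]:
  "(to_nat x, to_nat y) \<in> arcs (lgraph_of V R) \<longleftrightarrow> x \<in> V \<and> y \<in> V \<and> R x y"
  by (auto simp: arcs_lgraph_of)

lemma wf_lgraph_of:
  assumes "finite V" and "symp_on V R" and "irreflp_on V R"
  shows "wf_sgraph (lgraph_of V R)"
  using assms by (auto simp: wf_sgraph_def verts_lgraph_of arcs_lgraph_of sym_def irrefl_def
      symp_on_def irreflp_on_def)

lemma regular_lgraph_of:
  assumes "\<forall>x\<in>V. card {y\<in>V. R x y} = d"
  shows "regular d (lgraph_of V R :: ('l, 'f) lgraph)"
proof -
  have "nbrs (lgraph_of V R :: ('l, 'f) lgraph) (to_nat x) = to_nat ` {y\<in>V. R x y}" if "x \<in> V" for x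
    using that by (auto simp: nbrs_def arcs_lgraph_of)
  then show ?thesis
    using assms by (auto simp: regular_def verts_lgraph_of card_image inj_on_def)
qed

lemma regular_twins_lgraph_of:
  assumes "finite V" and "symp_on V R1" and "irreflp_on V R1"
    and "symp_on V R2" and "irreflp_on V R2"
    and "\<forall>x\<in>V. card {y\<in>V. R1 x y} = d" and "\<forall>x\<in>V. card {y\<in>V. R2 x y} = d"
  shows "regular_twins (lgraph_of V R1) (lgraph_of V R2)"
  using wf_lgraph_of[OF assms(1-3)] wf_lgraph_of[OF assms(1,4,5)]
    regular_lgraph_of[OF assms(6)] regular_lgraph_of[OF assms(7)]
  unfolding regular_twins_def by (auto simp: verts_lgraph_of lgraph_of_def)

lemma has_copy_lgraph_of:
  assumes "wf_sgraph H" and "inj_on e (verts H)" and "e ` verts H \<subseteq> V"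
    and "\<forall>x\<in>verts H. \<forall>y\<in>verts H. (x, y) \<in> arcs H \<longrightarrow> R (e x) (e y)"
    and "mode = Induced_Matching \<longrightarrow> (\<forall>x\<in>verts H. \<forall>y\<in>verts H. R (e x) (e y) \<longrightarrow> (x, y) \<in> arcs H)"
  shows "has_copy mode H (lgraph_of V R)"
proof (rule embeds_has_copy[OF assms(1)])
  show "embeds mode H (lgraph_of V R) (to_nat \<circ> e)"
    using assms(2-5) by (auto simp: embeds_def verts_lgraph_of inj_on_def)
qed

lemma nat_relabelling:
  assumes "wf_sgraph H"
  obtains \<gamma> adj where "bij_betw \<gamma> (verts H) {0..<card (verts H)}" and "symp adj" and "irreflp adj"
    and "\<And>u v. adj u v \<Longrightarrow> v < card (verts H)"
    and "\<And>x y. x \<in> verts H \<Longrightarrow> y \<in> verts H \<Longrightarrow> adj (\<gamma> x) (\<gamma> y) \<longleftrightarrow> (x, y) \<in> arcs H"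
    and "\<And>x. x \<in> verts H \<Longrightarrow> card {v. adj (\<gamma> x) v} = card (nbrs H x)"
proof -
  define k where "k = card (verts H)"
  obtain \<gamma> where \<gamma>: "bij_betw \<gamma> (verts H) {0..<k}"
    using assms ex_bij_betw_finite_nat unfolding k_def wf_sgraph_def by blast
  then have inj: "inj_on \<gamma> (verts H)"
    by (auto simp: bij_betw_def)
  define adj where "adj u v \<longleftrightarrow> (u, v) \<in> map_prod \<gamma> \<gamma> ` arcs H" for u v
  have adj_\<gamma>: "adj (\<gamma> x) (\<gamma> y) \<longleftrightarrow> (x, y) \<in> arcs H" if "x \<in> verts H" "y \<in> verts H" for x y
    using that inj arcs_subset_verts[OF assms] by (auto simp: adj_def inj_on_eq_iff)
  have adjE: "\<exists>x y. x \<in> verts H \<and> y \<in> verts H \<and> u = \<gamma> x \<and> v = \<gamma> y \<and> (x, y) \<in> arcs H"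
    if "adj u v" for u v
    using that arcs_subset_verts[OF assms] by (auto simp: adj_def)
  have "symp adj"
    using assms by (auto simp: adj_def symp_def wf_sgraph_def sym_def)
  moreover have "irreflp adj"
    using adjE adj_\<gamma> inj assms unfolding irreflp_def wf_sgraph_def irrefl_def by (metis inj_onD)
  moreover have "v < k" if "adj u v" for u v
    using adjE[OF that] bij_betwE[OF \<gamma>] by auto
  moreover have "card {v. adj (\<gamma> x) v} = card (nbrs H x)" if "x \<in> verts H" for x
  proof -
    have "{v. adj (\<gamma> x) v} = \<gamma> ` nbrs H x"
    proof (intro set_eqI iffI)
      fix v
      assume "v \<in> {v. adj (\<gamma> x) v}"
      then obtain x' y where "x' \<in> verts H" "\<gamma> x = \<gamma> x'" "v = \<gamma> y" "(x', y) \<in> arcs H"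
        using adjE by blast
      moreover from this have "x' = x"
        using inj that by (metis inj_onD)
      ultimately show "v \<in> \<gamma> ` nbrs H x"
        by (auto simp: nbrs_def)
    next
      fix v
      assume "v \<in> \<gamma> ` nbrs H x"
      then show "v \<in> {v. adj (\<gamma> x) v}"
        using adj_\<gamma> that nbrs_subset_verts[OF assms] by (auto simp: nbrs_def)
    qed
    then show ?thesis
      using inj nbrs_subset_verts[OF assms] by (simp add: card_image inj_on_subset)
  qed
  ultimately show thesis
    using that \<gamma> adj_\<gamma> unfolding k_def by blast
qed

lemma triangle_separated_twins:
  assumes "wf_sgraph H" and "has_triangle H" and "mode = Induced_Matching \<longrightarrow> is_complete H"
  shows "\<exists>G1 G2 :: ('l, 'f) lgraph. regular_twins G1 G2 \<and> has_copy mode H G1 \<and> \<not> has_copy mode H G2"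
proof -
  define k where "k = card (verts H)"
  obtain \<gamma> where \<gamma>: "bij_betw \<gamma> (verts H) {0..<k}"
    using assms(1) ex_bij_betw_finite_nat unfolding k_def wf_sgraph_def by blast
  define V :: "(nat \<times> bool) set" where "V = {0..<k} \<times> UNIV"
  define cliques :: "nat \<times> bool \<Rightarrow> nat \<times> bool \<Rightarrow> bool"
    where "cliques x y \<longleftrightarrow> snd x = snd y \<and> fst x \<noteq> fst y" for x y
  define crown :: "nat \<times> bool \<Rightarrow> nat \<times> bool \<Rightarrow> bool"
    where "crown x y \<longleftrightarrow> snd x \<noteq> snd y \<and> fst x \<noteq> fst y" for x y
  have "{y\<in>V. cliques x y} = ({0..<k} - {fst x}) \<times> {snd x}"
    and "{y\<in>V. crown x y} = ({0..<k} - {fst x}) \<times> {\<not> snd x}" for x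
    by (auto simp: V_def cliques_def crown_def)
  then have "\<forall>x\<in>V. card {y\<in>V. cliques x y} = k - 1" and "\<forall>x\<in>V. card {y\<in>V. crown x y} = k - 1"
    by (auto simp: V_def card_cartesian_product)
  then have "regular_twins (lgraph_of V cliques :: ('l, 'f) lgraph) (lgraph_of V crown)"
    by (intro regular_twins_lgraph_of)
      (auto simp: V_def cliques_def crown_def symp_on_def irreflp_on_def)
  moreover have "has_copy mode H (lgraph_of V cliques :: ('l, 'f) lgraph)"
  proof (rule has_copy_lgraph_of[where e = "\<lambda>w. (\<gamma> w, True)"])
    have "(x, y) \<in> arcs H \<longleftrightarrow> x \<noteq> y" if "mode = Induced_Matching" "x \<in> verts H" "y \<in> verts H" for x y
      using assms that by (auto simp: is_complete_def wf_sgraph_def irrefl_def)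
    then show "mode = Induced_Matching \<longrightarrow> (\<forall>x\<in>verts H. \<forall>y\<in>verts H.
                 cliques (\<gamma> x, True) (\<gamma> y, True) \<longrightarrow> (x, y) \<in> arcs H)"
      using \<gamma> by (auto simp: cliques_def bij_betw_def inj_on_def)
    show "\<forall>x\<in>verts H. \<forall>y\<in>verts H. (x, y) \<in> arcs H \<longrightarrow> cliques (\<gamma> x, True) (\<gamma> y, True)"
      using assms(1) \<gamma> by (auto simp: cliques_def wf_sgraph_def irrefl_def bij_betw_def inj_on_def)
  qed (use assms(1) \<gamma> in \<open>auto simp: V_def bij_betw_def inj_on_def\<close>)
  moreover have "\<not> has_copy mode H (lgraph_of V crown :: ('l, 'f) lgraph)"
    by (rule no_copy_in_bipartite[OF assms(1,2), where side = "\<lambda>n. snd (from_nat n :: nat \<times> bool)"])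
      (auto simp: arcs_lgraph_of crown_def)
  ultimately show ?thesis
    by blast
qed

definition toggle :: "nat \<Rightarrow> bool list \<Rightarrow> bool list" where
  "toggle l s = s[l := \<not> s ! l]"

lemma length_toggle [simp]: "length (toggle l s) = length s"
  by (simp add: toggle_def)

lemma toggle_toggle: "l < length s \<Longrightarrow> toggle l (toggle l s) = s"
  by (simp add: toggle_def)

lemma toggle_neq: "l < length s \<Longrightarrow> toggle l s \<noteq> s"
  by (metis toggle_def nth_list_update_eq)

lemma toggle_eq_toggle_iff: "l < length s \<Longrightarrow> l' < length s \<Longrightarrow> toggle l s = toggle l' s \<longleftrightarrow> l = l'"
  by (metis toggle_def nth_list_update_eq nth_list_update_neq)

definition padded_verts :: "nat \<Rightarrow> nat \<Rightarrow> (nat \<times> bool list \<times> nat) set" where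
  "padded_verts k d = {0..<k} \<times> {s. length s = d} \<times> {0..d}"

definition blocks_rel :: "nat \<times> bool list \<times> nat \<Rightarrow> nat \<times> bool list \<times> nat \<Rightarrow> bool" where
  "blocks_rel = (\<lambda>(u, s, i) (v, t, j). u = v \<and> s = t \<and> i \<noteq> j)"

text \<open>Padding of a graph on \<open>{0..<k}\<close> with maximum degree at most \<open>d\<close> to a \<open>d\<close>-regular
  graph: take a copy of the graph for every corner \<open>s\<close> of the cube \<open>{0,1}\<^sup>d\<close> and join the
  copies of \<open>u\<close> along the first \<open>d - deg u\<close> cube directions. The last coordinate makes
  \<open>d + 1\<close> disjoint copies of the result, so that it has as many vertices as the disjoint
  union of cliques \<open>K\<^bsub>d+1\<^esub>\<close> given by \<^const>\<open>blocks_rel\<close>.\<close>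

definition padded_rel :: "nat \<Rightarrow> (nat \<Rightarrow> nat \<Rightarrow> bool) \<Rightarrow>
    nat \<times> bool list \<times> nat \<Rightarrow> nat \<times> bool list \<times> nat \<Rightarrow> bool" where
  "padded_rel d adj = (\<lambda>(u, s, i) (v, t, j). i = j \<and>
     (s = t \<and> adj u v \<or> u = v \<and> (\<exists>l < d - card {w. adj u w}. t = toggle l s)))"

lemma padded_rel_iff:
  "padded_rel d adj (u, s, i) (v, t, j) \<longleftrightarrow>
     i = j \<and> (s = t \<and> adj u v \<or> u = v \<and> (\<exists>l < d - card {w. adj u w}. t = toggle l s))"
  by (simp add: padded_rel_def)

lemma finite_padded_verts: "finite (padded_verts k d)"
proof -
  have "finite {s :: bool list. length s = d}"
    using finite_lists_length_eq[of "UNIV :: bool set" d] by simp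
  then show ?thesis
    by (simp add: padded_verts_def)
qed

lemma symp_on_padded_rel:
  assumes "symp adj"
  shows "symp_on (padded_verts k d) (padded_rel d adj)"
proof (rule symp_onI)
  fix x y
  assume xy: "x \<in> padded_verts k d" "padded_rel d adj x y"
  obtain u s i v t j where x: "x = (u, s, i)" and y: "y = (v, t, j)"
    by (cases x, cases y) blast
  have s: "length s = d"
    using xy(1) by (simp add: x padded_verts_def)
  from xy(2) consider "i = j" "s = t" "adj u v"
    | l where "i = j" "u = v" "l < d - card {w. adj u w}" "t = toggle l s"
    unfolding x y padded_rel_iff by blast
  then show "padded_rel d adj y x"
  proof cases
    case 1
    then show ?thesis
      using sympD[OF assms] unfolding x y padded_rel_iff by blast
  next
    case (2 l)
    then have "s = toggle l t"
      using s by (simp add: toggle_toggle)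
    moreover have "l < d - card {w. adj v w}"
      using 2 by simp
    ultimately show ?thesis
      using 2(1,2) unfolding x y padded_rel_iff by auto
  qed
qed

lemma irreflp_on_padded_rel:
  assumes "irreflp adj"
  shows "irreflp_on (padded_verts k d) (padded_rel d adj)"
proof (rule irreflp_onI)
  fix x
  assume "x \<in> padded_verts k d"
  then obtain u s i where x: "x = (u, s, i)" and s: "length s = d"
    by (auto simp: padded_verts_def)
  have "s \<noteq> toggle l s" if "l < d - card {w. adj u w}" for l
    using that s toggle_neq[of l s] by (metis diff_le_self order_less_le_trans)
  then show "\<not> padded_rel d adj x x"
    using irreflpD[OF assms] unfolding x padded_rel_iff by blast
qed

lemma padded_rel_nbrs:
  assumes "\<forall>u v. adj u v \<longrightarrow> v < k" and "(u, s, i) \<in> padded_verts k d"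
  shows "{y \<in> padded_verts k d. padded_rel d adj (u, s, i) y} =
         (\<lambda>v. (v, s, i)) ` {v. adj u v} \<union> (\<lambda>l. (u, toggle l s, i)) ` {..< d - card {v. adj u v}}"
  using assms by (auto simp: padded_verts_def padded_rel_def)

lemma card_padded_rel_nbrs:
  assumes "\<forall>u v. adj u v \<longrightarrow> v < k" and "\<forall>u<k. card {v. adj u v} \<le> d"
    and "x \<in> padded_verts k d"
  shows "card {y \<in> padded_verts k d. padded_rel d adj x y} = d"
proof -
  obtain u s i where x: "x = (u, s, i)" and u: "u < k" and s: "length s = d"
    using assms(3) by (auto simp: padded_verts_def)
  let ?deg = "card {v. adj u v}"
  have deg: "?deg \<le> d"
    using assms(2) u by blast
  have "finite {v. adj u v}"
    using assms(1) by (auto intro: finite_subset[of _ "{..<k}"])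
  then have "card ((\<lambda>v. (v, s, i)) ` {v. adj u v}) = ?deg"
    by (simp add: card_image inj_on_def)
  moreover have "inj_on (\<lambda>l. (u, toggle l s, i)) {..< d - ?deg}"
    using s toggle_eq_toggle_iff by (auto simp: inj_on_def)
  then have "card ((\<lambda>l. (u, toggle l s, i)) ` {..< d - ?deg}) = d - ?deg"
    by (simp add: card_image)
  moreover have "s \<noteq> toggle l s" if "l < d - ?deg" for l
    using that s toggle_neq[of l s] by (metis diff_le_self order_less_le_trans)
  then have "(\<lambda>v. (v, s, i)) ` {v. adj u v} \<inter> (\<lambda>l. (u, toggle l s, i)) ` {..< d - ?deg} = {}"
    by auto
  ultimately show ?thesis
    using padded_rel_nbrs[OF assms(1) assms(3)[unfolded x]] deg \<open>finite {v. adj u v}\<close>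
    by (simp add: x card_Un_disjoint)
qed

lemma card_blocks_rel_nbrs:
  assumes "x \<in> padded_verts k d"
  shows "card {y \<in> padded_verts k d. blocks_rel x y} = d"
proof -
  obtain u s i where x: "x = (u, s, i)" and "i \<le> d"
    using assms by (auto simp: padded_verts_def)
  moreover have "{y \<in> padded_verts k d. blocks_rel x y} = (\<lambda>j. (u, s, j)) ` ({0..d} - {i})"
    using assms by (auto simp: x padded_verts_def blocks_rel_def)
  ultimately show ?thesis
    by (simp add: card_image inj_on_def)
qed

lemma has_copy_padded:
  assumes "wf_sgraph H" and "bij_betw \<gamma> (verts H) {0..<card (verts H)}"
    and "\<And>x y. x \<in> verts H \<Longrightarrow> y \<in> verts H \<Longrightarrow> adj (\<gamma> x) (\<gamma> y) \<longleftrightarrow> (x, y) \<in> arcs H"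
  shows "has_copy mode H (lgraph_of (padded_verts (card (verts H)) d) (padded_rel d adj))"
proof (rule has_copy_lgraph_of[OF assms(1), where e = "\<lambda>x. (\<gamma> x, replicate d False, 0)"])
  have "replicate d False \<noteq> toggle l (replicate d False)" if "l < d - card {w. adj u w}" for l u
    using that toggle_neq[of l "replicate d False"] by (simp add: not_sym)
  then show "mode = Induced_Matching \<longrightarrow> (\<forall>x\<in>verts H. \<forall>y\<in>verts H.
      padded_rel d adj (\<gamma> x, replicate d False, 0) (\<gamma> y, replicate d False, 0) \<longrightarrow> (x, y) \<in> arcs H)"
    using assms(3) by (auto simp: padded_rel_iff)
qed (use assms(2,3) in \<open>auto simp: bij_betw_def inj_on_def padded_verts_def padded_rel_iff\<close>)

lemma no_copy_in_blocks:
  assumes "wf_sgraph H" and "connected_graph H"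
    and "d + 1 < card (verts H) \<or> mode = Induced_Matching \<and> \<not> is_complete H"
  shows "\<not> has_copy mode H (lgraph_of (padded_verts k d) blocks_rel :: ('l, 'f) lgraph)"
proof -
  let ?G = "lgraph_of (padded_verts k d) blocks_rel :: ('l, 'f) lgraph"
  define cl where "cl n = (case from_nat n :: nat \<times> bool list \<times> nat of (u, s, _) \<Rightarrow> (u, s))" for n
  have cl: "cl (to_nat (u, s, i)) = (u, s)" for u s and i :: nat
    by (simp add: cl_def)
  have arcs_iff: "\<forall>a b. (a, b) \<in> arcs ?G \<longleftrightarrow> a \<in> verts ?G \<and> b \<in> verts ?G \<and> cl a = cl b \<and> a \<noteq> b"
    by (auto simp: arcs_lgraph_of verts_lgraph_of blocks_rel_def cl)
  from assms(3) show ?thesis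
  proof
    assume small: "d + 1 < card (verts H)"
    have "card {n \<in> verts ?G. cl n = c} < card (verts H)" for c
    proof -
      have "{n \<in> verts ?G. cl n = c} \<subseteq> (\<lambda>j. to_nat (fst c, snd c, j)) ` {0..d}"
        by (auto simp: verts_lgraph_of padded_verts_def cl)
      then have "card {n \<in> verts ?G. cl n = c} \<le> card ((\<lambda>j. to_nat (fst c, snd c, j)) ` {0..d})"
        by (intro card_mono) simp_all
      also have "\<dots> = d + 1"
        by (simp add: card_image inj_on_def)
      finally show ?thesis
        using small by simp
    qed
    then show ?thesis
      using arcs_iff finite_padded_verts
      by (intro no_copy_if_classes_small[OF assms(1,2), where cl = cl]) (auto simp: verts_lgraph_of)
  next
    assume "mode = Induced_Matching \<and> \<not> is_complete H"
    then show ?thesis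
      using no_induced_copy_in_cliques[OF assms(1,2) _ arcs_iff] by simp
  qed
qed

lemma padded_separated_twins:
  assumes "wf_sgraph H" and "connected_graph H" and "\<forall>x\<in>verts H. card (nbrs H x) \<le> d"
    and "d + 1 < card (verts H) \<or> mode = Induced_Matching \<and> \<not> is_complete H"
  shows "\<exists>G1 G2 :: ('l, 'f) lgraph. regular_twins G1 G2 \<and> has_copy mode H G1 \<and> \<not> has_copy mode H G2"
proof -
  obtain \<gamma> adj where \<gamma>: "bij_betw \<gamma> (verts H) {0..<card (verts H)}" and "symp adj" and "irreflp adj"
    and adj_less: "\<And>u v. adj u v \<Longrightarrow> v < card (verts H)"
    and adj_\<gamma>: "\<And>x y. x \<in> verts H \<Longrightarrow> y \<in> verts H \<Longrightarrow> adj (\<gamma> x) (\<gamma> y) \<longleftrightarrow> (x, y) \<in> arcs H"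
    and deg_\<gamma>: "\<And>x. x \<in> verts H \<Longrightarrow> card {v. adj (\<gamma> x) v} = card (nbrs H x)"
    using nat_relabelling[OF assms(1)] by blast
  have deg: "card {v. adj u v} \<le> d" if "u < card (verts H)" for u
  proof -
    have "u \<in> \<gamma> ` verts H"
      using \<gamma> that by (simp add: bij_betw_def)
    then obtain x where "x \<in> verts H" "u = \<gamma> x"
      by blast
    then show ?thesis
      using assms(3) deg_\<gamma> by simp
  qed
  let ?G1 = "lgraph_of (padded_verts (card (verts H)) d) (padded_rel d adj) :: ('l, 'f) lgraph"
  let ?G2 = "lgraph_of (padded_verts (card (verts H)) d) blocks_rel :: ('l, 'f) lgraph"
  have "regular_twins ?G1 ?G2"
    using deg adj_less \<open>symp adj\<close> \<open>irreflp adj\<close>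
    by (intro regular_twins_lgraph_of[where d = d] finite_padded_verts symp_on_padded_rel
        irreflp_on_padded_rel card_padded_rel_nbrs card_blocks_rel_nbrs ballI)
      (auto simp: symp_on_def irreflp_on_def blocks_rel_def)
  moreover have "has_copy mode H ?G1"
    using has_copy_padded[OF assms(1) \<gamma> adj_\<gamma>] .
  moreover have "\<not> has_copy mode H ?G2"
    by (rule no_copy_in_blocks[OF assms(1,2,4)])
  ultimately show ?thesis
    by blast
qed

section \<open>Shape of the pattern\<close>

lemma two_le_card_verts:
  assumes "wf_sgraph H" and "connected_graph H" and "\<not> is_star H \<or> \<not> is_single_vertex H"
  shows "2 \<le> card (verts H)"
proof (rule ccontr)
  assume "\<not> 2 \<le> card (verts H)"
  moreover have "card (verts H) \<noteq> 0"
    using assms(1,2) by (simp add: wf_sgraph_def connected_graph_def)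
  ultimately obtain a where a: "verts H = {a}"
    by (metis One_nat_def card_1_singletonE less_2_cases not_le)
  then have "arcs H = {}"
    using assms(1) by (auto simp: wf_sgraph_def irrefl_def)
  then show False
    using assms(3) a by (auto simp: is_star_def is_single_vertex_def)
qed

lemma arcs_nonempty:
  assumes "connected_graph H" and "2 \<le> card (verts H)"
  shows "arcs H \<noteq> {}"
proof -
  obtain x y where "x \<in> verts H" "y \<in> verts H" "x \<noteq> y"
    using assms(2) by (metis card_le_Suc_iff numeral_2_eq_2 insertCI)
  then have "(x, y) \<in> (arcs H)\<^sup>*" "x \<noteq> y"
    using assms(1) by (auto simp: connected_graph_def)
  then show ?thesis
    by (metis converse_rtranclE empty_iff)
qed

lemma complete_has_triangle:
  assumes "is_complete H" and "3 \<le> card (verts H)"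
  shows "has_triangle H"
proof -
  obtain p q r where "p \<in> verts H" "q \<in> verts H" "r \<in> verts H" "p \<noteq> q" "q \<noteq> r" "p \<noteq> r"
    using assms(2) by (auto simp: numeral_3_eq_3 card_le_Suc_iff)
  then show ?thesis
    using assms(1) unfolding is_complete_def has_triangle_def by blast
qed

lemma complete_single_edge:
  assumes "wf_sgraph H" and "is_complete H" and "card (verts H) = 2"
  shows "is_single_edge H"
proof -
  obtain a b where ab: "verts H = {a, b}" "a \<noteq> b"
    using assms(3) card_2_iff by metis
  then have "arcs H = {(a, b), (b, a)}"
    using assms(1,2) by (auto simp: is_complete_def wf_sgraph_def irrefl_def)
  then show ?thesis
    using ab by (auto simp: is_single_edge_def)
qed

lemma triangle_free_degree_bound:
  assumes "wf_sgraph H" and "\<not> is_star H" and "\<not> has_triangle H" and "c \<in> verts H"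
  shows "card (nbrs H c) + 2 \<le> card (verts H)"
proof (rule ccontr)
  assume "\<not> ?thesis"
  then have "card (nbrs H c) = card (verts H - {c})"
    using card_nbrs_less[OF assms(1,4)] assms(1,4) by (simp add: wf_sgraph_def)
  moreover have "nbrs H c \<subseteq> verts H - {c}"
    using assms(1) by (auto simp: nbrs_def wf_sgraph_def irrefl_def)
  ultimately have nbrs_c: "nbrs H c = verts H - {c}"
    using assms(1) by (intro card_subset_eq) (auto simp: wf_sgraph_def)
  have "(x, y) \<in> arcs H \<longleftrightarrow> x \<in> verts H \<and> y \<in> verts H \<and> x \<noteq> y \<and> (x = c \<or> y = c)" for x y
  proof
    assume xy: "(x, y) \<in> arcs H"
    have "x = c \<or> y = c"
    proof (rule ccontr)
      assume "\<not> (x = c \<or> y = c)"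
      then have "(c, x) \<in> arcs H" "(c, y) \<in> arcs H"
        using nbrs_c xy arcs_subset_verts[OF assms(1)] by (auto simp: nbrs_def)
      with xy show False
        using assms(3) by (auto simp: has_triangle_def)
    qed
    then show "x \<in> verts H \<and> y \<in> verts H \<and> x \<noteq> y \<and> (x = c \<or> y = c)"
      using xy assms(1) by (auto simp: wf_sgraph_def irrefl_def)
  next
    assume "x \<in> verts H \<and> y \<in> verts H \<and> x \<noteq> y \<and> (x = c \<or> y = c)"
    then show "(x, y) \<in> arcs H"
      using nbrs_c assms(1) by (auto simp: nbrs_def wf_sgraph_def sym_def)
  qed
  then show False
    using assms(2,4) by (auto simp: is_star_def)
qed

lemma exists_separated_twins:
  assumes "wf_sgraph H" and "connected_graph H"
    and "(mode = Subgraph_Matching \<and> \<not> is_star H) \<or>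
         (mode = Induced_Matching \<and> \<not> is_single_vertex H \<and> \<not> is_single_edge H)"
  shows "\<exists>G1 G2 :: ('l, 'f) lgraph. regular_twins G1 G2 \<and> has_copy mode H G1 \<and> \<not> has_copy mode H G2"
proof -
  have two: "2 \<le> card (verts H)"
    using assms by (intro two_le_card_verts) auto
  consider "has_triangle H" and "mode = Induced_Matching \<longrightarrow> is_complete H"
    | "mode = Subgraph_Matching" and "\<not> is_star H" and "\<not> has_triangle H"
    | "mode = Induced_Matching" and "\<not> is_complete H"
  proof (cases "mode = Induced_Matching \<and> is_complete H")
    case True
    then have "card (verts H) \<noteq> 2"
      using assms complete_single_edge by auto
    then have "has_triangle H"
      using True two complete_has_triangle by fastforce
    with True show thesis
      using that by blast
  qed (use assms in \<open>cases mode; auto\<close>)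
  then show ?thesis
  proof cases
    case 1
    then show ?thesis
      using triangle_separated_twins[OF assms(1)] by blast
  next
    case 2
    then have "\<forall>x\<in>verts H. card (nbrs H x) \<le> card (verts H) - 2"
      using triangle_free_degree_bound[OF assms(1)] by fastforce
    moreover have "card (verts H) - 2 + 1 < card (verts H)"
      using two by simp
    ultimately show ?thesis
      using padded_separated_twins[OF assms(1,2)] by blast
  next
    case 3
    then have "\<forall>x\<in>verts H. card (nbrs H x) \<le> card (verts H) - 1"
      using card_nbrs_less[OF assms(1)] by fastforce
    then show ?thesis
      using 3 by (intro padded_separated_twins[OF assms(1,2)]) simp_all
  qed
qed

theorem theorem3p1:
  fixes H :: "'w sgraph"
    and mode :: matching
    and var :: gsn_variant
  assumes "wf_sgraph H"
    and "connected_graph H"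
    and "(mode = Subgraph_Matching \<and> \<not> is_star H) \<or>
         (mode = Induced_Matching \<and> \<not> is_single_vertex H \<and> \<not> is_single_edge H)"
  shows
    "(\<forall>N :: ('l::countable, 'h, 'm, unit, 'f, 'o) mpnet.
        \<exists>N' :: ('l, 'h, 'm, 'w gsn_struct, 'f, 'o) mpnet.
          \<forall>G :: ('l, 'f) lgraph. wf_sgraph G \<longrightarrow> gsn_output mode var H N' G = mpnn_output N G)
   \<and> (\<forall>G1 G2 :: ('l, 'f) lgraph. wf_sgraph G1 \<longrightarrow> wf_sgraph G2 \<longrightarrow> wl_distinguishes G1 G2 \<longrightarrow>
        (\<exists>N :: ('l, nat, nat, 'w gsn_struct, 'f, nat) mpnet.
           gsn_output mode var H N G1 \<noteq> gsn_output mode var H N G2))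
   \<and> (\<exists>G1 G2 :: ('l, 'f) lgraph. wf_sgraph G1 \<and> wf_sgraph G2 \<and> \<not> wl_distinguishes G1 G2 \<and>
        (\<forall>N :: ('l, 'h, 'm, unit, 'f, 'o) mpnet. mpnn_output N G1 = mpnn_output N G2) \<and>
        (\<exists>N :: ('l, nat, nat, 'w gsn_struct, 'f, nat) mpnet.
           gsn_output mode var H N G1 \<noteq> gsn_output mode var H N G2))"
proof (intro conjI allI impI)
  show "\<exists>N' :: ('l, 'h, 'm, 'w gsn_struct, 'f, 'o) mpnet.
          \<forall>G. wf_sgraph G \<longrightarrow> gsn_output mode var H N' G = mpnn_output N G"
    for N :: "('l, 'h, 'm, unit, 'f, 'o) mpnet"
    by (metis gsn_output_def net_output_forget_struct)
  show "\<exists>N :: ('l, nat, nat, 'w gsn_struct, 'f, nat) mpnet.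
          gsn_output mode var H N G1 \<noteq> gsn_output mode var H N G2"
    if "wl_distinguishes G1 G2" for G1 G2 :: "('l, 'f) lgraph"
    using wl_net_distinguishes[OF that] unfolding gsn_output_def by blast
  obtain G1 G2 :: "('l, 'f) lgraph" where twins: "regular_twins G1 G2"
    and copy: "has_copy mode H G1" and no_copy: "\<not> has_copy mode H G2"
    using exists_separated_twins[OF assms] by blast
  have "arcs H \<noteq> {}"
    using assms by (intro arcs_nonempty two_le_card_verts) auto
  then show "\<exists>G1 G2 :: ('l, 'f) lgraph. wf_sgraph G1 \<and> wf_sgraph G2 \<and> \<not> wl_distinguishes G1 G2 \<and>
        (\<forall>N :: ('l, 'h, 'm, unit, 'f, 'o) mpnet. mpnn_output N G1 = mpnn_output N G2) \<and>
        (\<exists>N :: ('l, nat, nat, 'w gsn_struct, 'f, nat) mpnet.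
           gsn_output mode var H N G1 \<noteq> gsn_output mode var H N G2)"
    using twins copy no_copy assms(1) regular_twins_not_wl_distinguishes
      regular_twins_mpnn_output_eq detect_net_separates
    unfolding regular_twins_def by blast
qed

end
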